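(* Consider the system, for environments $i=1,\dots,N$ and time steps $t=1,\dots,T$, $$x_{t+1}^{(i)} = f_0(x_t^{(i)}) + B(x_t^{(i)})u_t^{(i)} - f(x_t^{(i)},c^{(i)}) + w_t^{(i)},\qquad x_1^{(i)}=0,$$ under the standing assumptions described in the context (full actuation, $\|w_t^{(i)}\|\le W$, e-ISS of $f_0$ with constants $\beta,\gamma,\rho$). Assume the unknown dynamics has the form $f(x,c)=F(\phi(x;\Theta),c)$ for a known model $F(\phi(\cdot;\cdot),\cdot)$ and some true parameter $\Theta\in\mathcal{K}_1\subseteq\mathbb{R}^p$, with $c^{(i)}\in\mathcal{K}_2\subseteq\mathbb{R}^h$ for all $i$, where $\mathcal{K}_1,\mathcal{K}_2$ are convex sets, and assume each observed loss $\ell_t^{(i)}(\hat\Theta,\hat c)$ is differentiable and jointly convex in $(\hat\Theta,\hat c)$. Run OMAC in its convex instantiation (described in the context) with a meta-adapter $\mathcal{A}_1$ whose total regret is at most $T\cdot\varepsilon_1(N)$ and an inner-adapter $\mathcal{A}_2$ whose total regret is at most $N\cdot\varepsilon_2(T)$, where $\varepsilon_1(N)=o(N)$ and $\varepsilon_2(T)=o(T)$. Then $$\mathsf{ACE}:=\frac{1}{TN}\sum_{i=1}^N\sum_{t=1}^T\|x_t^{(i)}\| \le \frac{\gamma}{1-\rho}\sqrt{W^2+\frac{\varepsilon_2(T)}{T}+\frac{\varepsilon_1(N)}{N}}.$$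
   Context: Setting: states $x_t^{(i)}\in\mathbb{R}^n$, controls $u_t^{(i)}\in\mathbb{R}^m$, known $f_0:\mathbb{R}^n\to\mathbb{R}^n$, known $B:\mathbb{R}^n\to\mathbb{R}^{n\times m}$ with $\mathrm{rank}(B(x))=n$ for all $x$, unknown $f:\mathbb{R}^n\times\mathbb{R}^h\to\mathbb{R}^n$, unknown environment parameters $c^{(i)}$ (possibly chosen adversarially and adaptively), and disturbances $w_t^{(i)}$ (possibly adversarial) with $\|w_t^{(i)}\|\le W$. $f_0$ is exponentially input-to-state stable (e-ISS): there are $\beta,\gamma\ge0$, $0\le\rho<1$ such that for every $t$ and every $v_1,\dots,v_{t-1}\in\mathbb{R}^n$, the iterates $x_{k+1}=f_0(x_k)+v_k$ satisfy $\|x_t\|\le\beta\rho^{t-1}\|x_1\|+\gamma\sum_{k=1}^{t-1}\rho^{t-1-k}\|v_k\|$. Write $B_t^{(i)}=B(x_t^{(i)})$, $f_t^{(i)}=f(x_t^{(i)},c^{(i)})$. OMAC (convex instantiation): parameters $\hat\Theta^{(i)}\in\mathcal{K}_1$ (one per environment, $\hat\Theta^{(1)}\in\mathcal{K}_1$ initialized by $\mathcal{A}_1$) and $\hat c_t^{(i)}\in\mathcal{K}_2$ ($\hat c_1^{(i)}\in\mathcal{K}_2$ initialized by $\mathcal{A}_2$ in each environment). At step $(i,t)$ the controller computes $\hat f_t^{(i)}=F(\phi(x_t^{(i)};\hat\Theta^{(i)}),\hat c_t^{(i)})$, applies $u_t^{(i)}=B_t^{(i)\dagger}\hat f_t^{(i)}$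 ($\dagger$ = pseudo-inverse), observes $x_{t+1}^{(i)}$ and $y_t^{(i)}=f_0(x_t^{(i)})+B_t^{(i)}u_t^{(i)}-x_{t+1}^{(i)}=f_t^{(i)}-w_t^{(i)}$, and forms the loss $\ell_t^{(i)}(\hat\Theta,\hat c)=\|F(\phi(x_t^{(i)};\hat\Theta),\hat c)-y_t^{(i)}\|^2$. The inner cost is the linear function $g_t^{(i)}(\hat c)=\nabla_{\hat c}\ell_t^{(i)}(\hat\Theta^{(i)},\hat c_t^{(i)})\cdot\hat c$ and $\mathcal{A}_2$ produces $\hat c_{t+1}^{(i)}\in\mathcal{K}_2$ from $\hat c_t^{(i)}$ and $g_{1:t}^{(i)}$. At the end of environment $i$, the outer cost is $G^{(i)}(\hat\Theta)=\sum_{t=1}^T\nabla_{\hat\Theta}\ell_t^{(i)}(\hat\Theta^{(i)},\hat c_t^{(i)})\cdot\hat\Theta$ and $\mathcal{A}_1$ produces $\hat\Theta^{(i+1)}\in\mathcal{K}_1$ from $\hat\Theta^{(i)}$ and $G^{(1:i)}$. The parameters $c^{(i)}$ are never observed by the controller. Total regret of $\mathcal{A}_1$: $\sum_{i=1}^N G^{(i)}(\hat\Theta^{(i)})-\min_{\Theta'\in\mathcal{K}_1}\sum_{i=1}^N G^{(i)}(\Theta')$. Total regret of $\mathcal{A}_2$: $\sum_{i=1}^N\big[\sum_{t=1}^T g_t^{(i)}(\hat c_t^{(i)})-\min_{c'\in\mathcal{K}_2}\sum_{t=1}^T g_t^{(i)}(c')\big]$. *)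

theory Defs
  imports "HOL-Analysis.Analysis" "HOL-Library.Landau_Symbols"
begin

definition pinv :: "real^'m^'n \<Rightarrow> real^'n^'m" where
  "pinv A = (THE X. A ** X ** A = A \<and> X ** A ** X = X \<and>
                    transpose (A ** X) = A ** X \<and> transpose (X ** A) = X ** A)"

text \<open>Exponential input-to-state stability of f0 with constants beta, gamma, rho
  (iterates indexed from 1).\<close>
definition eISS :: "(real^'n \<Rightarrow> real^'n) \<Rightarrow> real \<Rightarrow> real \<Rightarrow> real \<Rightarrow> bool" where
  "eISS f0 \<beta> \<gamma> \<rho> \<longleftrightarrow> \<beta> \<ge> 0 \<and> \<gamma> \<ge> 0 \<and> 0 \<le> \<rho> \<and> \<rho> < 1 \<and>
     (\<forall>(xs :: nat \<Rightarrow> real^'n) (v :: nat \<Rightarrow> real^'n) t.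
        (\<forall>k\<ge>1. xs (Suc k) = f0 (xs k) + v k) \<longrightarrow> t \<ge> 1 \<longrightarrow>
        norm (xs t) \<le> \<beta> * \<rho> ^ (t - 1) * norm (xs 1)
                       + \<gamma> * (\<Sum>k = 1..t - 1. \<rho> ^ (t - 1 - k) * norm (v k)))"

definition omac_loss ::
  "('z \<Rightarrow> real^'h \<Rightarrow> real^'n) \<Rightarrow> (real^'n \<Rightarrow> real^'p \<Rightarrow> 'z) \<Rightarrow> real^'n \<Rightarrow> real^'n
    \<Rightarrow> (real^'p) \<times> (real^'h) \<Rightarrow> real" where
  "omac_loss F \<phi> x y = (\<lambda>(\<Theta>, c). (norm (F (\<phi> x \<Theta>) c - y))\<^sup>2)"

definition ACE :: "nat \<Rightarrow> nat \<Rightarrow> (nat \<Rightarrow> nat \<Rightarrow> real^'n) \<Rightarrow> real" where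
  "ACE N T x = (\<Sum>i = 1..N. \<Sum>t = 1..T. norm (x i t)) / (real T * real N)"

end

theory Submission
  imports Defs
begin

text \<open>
  Full actuation gives B (pinv B) = 1, so the control cancels the estimated dynamics and the
  residual x(t+1) - f0(x(t)) is exactly the prediction error of the current estimates: its
  square is the observed loss at (\<Theta>hat, chat), while the loss at the true (\<Theta>, c) is
  |w|^2 \<le> W^2. Convexity bounds the difference of the two losses by the gradient paired with
  the parameter error, which splits into the linear costs charged to the outer and to the inner
  adapter; summing and inserting both regret bounds bounds the mean squared residual by
  W^2 + \<epsilon>2(T)/T + \<epsilon>1(N)/N. Since x(1) = 0, e-ISS bounds the summed state norms by
  \<gamma>/(1 - \<rho>) times the summed residual norms, and Cauchy-Schwarz passes from the mean
  residual to the root mean square.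
\<close>

definition moore_penrose :: "real^'m^'n \<Rightarrow> real^'n^'m \<Rightarrow> bool" where
  "moore_penrose A X \<longleftrightarrow> A ** X ** A = A \<and> X ** A ** X = X \<and>
     transpose (A ** X) = A ** X \<and> transpose (X ** A) = X ** A"

lemma moore_penrose_unique:
  assumes "moore_penrose A X" and "moore_penrose A Y"
  shows "X = Y"
proof -
  have X: "A ** X ** A = A" "X ** A ** X = X" "transpose (A ** X) = A ** X" "transpose (X ** A) = X ** A"
    and Y: "A ** Y ** A = A" "Y ** A ** Y = Y" "transpose (A ** Y) = A ** Y" "transpose (Y ** A) = Y ** A"
    using assms by (simp_all add: moore_penrose_def)
  have "A ** X = (A ** Y) ** (A ** X)"
    by (metis Y(1) matrix_mul_assoc)
  also have "\<dots> = transpose ((A ** X) ** (A ** Y))"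
    by (metis X(3) Y(3) matrix_transpose_mul)
  also have "\<dots> = A ** Y"
    by (metis X(1) Y(3) matrix_mul_assoc)
  finally have AX: "A ** X = A ** Y" .
  have "X ** A = (X ** A) ** (Y ** A)"
    by (metis Y(1) matrix_mul_assoc)
  also have "\<dots> = transpose ((Y ** A) ** (X ** A))"
    by (metis X(4) Y(4) matrix_transpose_mul)
  also have "\<dots> = Y ** A"
    by (metis X(1) Y(4) matrix_mul_assoc)
  finally have XA: "X ** A = Y ** A" .
  have "X = X ** A ** X"
    by (simp only: X(2))
  also have "\<dots> = Y ** A ** Y"
    by (metis AX XA matrix_mul_assoc)
  also have "\<dots> = Y"
    by (simp only: Y(2))
  finally show ?thesis .
qed

lemma pinv_eqI:
  assumes "moore_penrose A X"
  shows "pinv A = X"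
  unfolding pinv_def moore_penrose_def[symmetric]
  using assms moore_penrose_unique by blast

lemma matrix_mul_pinv_full_row_rank:
  fixes A :: "real^'m^'n"
  assumes "rank A = CARD('n)"
  shows "A ** pinv A = mat 1"
proof -
  define C where "C = A ** transpose A"
  have inj: "inj ((*v) (transpose A))"
    using assms full_rank_injective[of "transpose A"] by (simp add: rank_transpose)
  have "v = 0" if "C *v v = 0" for v
  proof -
    have "inner (transpose A *v v) (transpose A *v v) = inner v (A *v (transpose A *v v))"
      by (simp add: dot_lmul_matrix)
    also have "\<dots> = inner v (C *v v)"
      by (metis C_def matrix_vector_mul_assoc)
    finally have "transpose A *v v = transpose A *v 0"
      using that by simp
    then show ?thesis
      by (rule injD[OF inj])
  qed
  then obtain M where MC: "M ** C = mat 1"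
    using matrix_left_invertible_ker by blast
  then have CM: "C ** M = mat 1"
    by (rule matrix_left_right_inverse[THEN iffD1])
  have "transpose M ** C = transpose (C ** M)"
    by (simp add: C_def matrix_transpose_mul matrix_mul_assoc)
  then have "transpose M = M"
    using MC CM by (metis matrix_mul_assoc matrix_mul_lid matrix_mul_rid transpose_mat)
  define X where "X = transpose A ** M"
  have AX: "A ** X = mat 1"
    using CM by (simp add: X_def C_def matrix_mul_assoc)
  have "moore_penrose A X"
    unfolding moore_penrose_def
    using AX \<open>transpose M = M\<close>
    by (simp add: X_def matrix_transpose_mul matrix_mul_assoc[symmetric] transpose_mat)
  then have "pinv A = X"
    by (rule pinv_eqI)
  with AX show ?thesis
    by simp
qed

lemma convex_on_restrict_line:
  assumes "convex_on UNIV L"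
  shows "convex_on UNIV (\<lambda>s::real. L (p + s *\<^sub>R d))"
proof (rule convex_onI)
  fix t a b :: real
  assume "0 < t" "t < 1"
  have "p + ((1 - t) * a + t * b) *\<^sub>R d = (1 - t) *\<^sub>R (p + a *\<^sub>R d) + t *\<^sub>R (p + b *\<^sub>R d)"
    by (simp add: algebra_simps)
  then show "L (p + ((1 - t) *\<^sub>R a + t *\<^sub>R b) *\<^sub>R d) \<le> (1 - t) * L (p + a *\<^sub>R d) + t * L (p + b *\<^sub>R d)"
    using assms \<open>0 < t\<close> \<open>t < 1\<close> by (simp add: convex_onD)
qed simp

lemma convex_on_above_tangent:
  fixes L :: "'a::real_normed_vector \<Rightarrow> real"
  assumes convex: "convex_on UNIV L" and deriv: "(L has_derivative D) (at p)"
  shows "L p + D (q - p) \<le> L q"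
proof -
  define g where "g s = L (p + s *\<^sub>R (q - p))" for s :: real
  have "((\<lambda>s::real. p + s *\<^sub>R (q - p)) has_derivative (\<lambda>s. s *\<^sub>R (q - p))) (at 0)"
    by (auto intro!: derivative_eq_intros)
  then have "(g has_derivative (\<lambda>s. D (s *\<^sub>R (q - p)))) (at 0)"
    unfolding g_def by (rule has_derivative_compose) (simp add: deriv)
  moreover have "D (s *\<^sub>R (q - p)) = D (q - p) * s" for s
    using linear_scale[OF has_derivative_linear[OF deriv]] by simp
  ultimately have "(g has_field_derivative D (q - p)) (at 0)"
    by (simp add: has_field_derivative_def)
  moreover have "convex_on UNIV g"
    unfolding g_def by (rule convex_on_restrict_line[OF convex])
  ultimately have "D (q - p) * (1 - 0) \<le> g 1 - g 0"
    by (intro convex_on_imp_above_tangent) auto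
  then show ?thesis
    by (simp add: g_def)
qed

lemma convex_on_prod_above_tangent:
  fixes L :: "'a::real_normed_vector \<times> 'b::real_normed_vector \<Rightarrow> real"
  assumes "convex_on UNIV L" and "(L has_derivative D) (at (a, b))"
  shows "L (a, b) \<le> L (a', b') + (D (a, 0) - D (a', 0)) + (D (0, b) - D (0, b'))"
proof -
  have lin: "linear D"
    using assms(2) by (rule has_derivative_linear)
  have "(a', b') - (a, b) = ((a', 0) - (a, 0)) + ((0, b') - (0, b))"
    by simp
  then have "D ((a', b') - (a, b)) = (D (a', 0) - D (a, 0)) + (D (0, b') - D (0, b))"
    by (simp only: linear_add[OF lin] linear_diff[OF lin])
  then show ?thesis
    using convex_on_above_tangent[OF assms, of "(a', b')"] by simp
qed

lemma sum_geometric_convolution_le: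
  fixes \<rho> :: real and a :: "nat \<Rightarrow> real"
  assumes "0 \<le> \<rho>" "\<rho> < 1" and a_nonneg: "\<And>k. 0 \<le> a k"
  shows "(\<Sum>t = 1..T. \<Sum>k = 1..t - 1. \<rho> ^ (t - 1 - k) * a k) \<le> (\<Sum>k = 1..T. a k) / (1 - \<rho>)"
proof -
  have tail: "(\<Sum>t\<in>{k<..T}. \<rho> ^ (t - 1 - k)) \<le> 1 / (1 - \<rho>)" for k
  proof -
    have "(\<Sum>t\<in>{k<..T}. \<rho> ^ (t - 1 - k)) = (\<Sum>j<T - k. \<rho> ^ j)"
      by (rule sum.reindex_bij_witness[of _ "\<lambda>j. j + Suc k" "\<lambda>t. t - Suc k"]) auto
    also have "\<dots> = (1 - \<rho> ^ (T - k)) / (1 - \<rho>)"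
      using assms by (simp add: sum_gp_strict)
    also have "\<dots> \<le> 1 / (1 - \<rho>)"
      using assms by (intro divide_right_mono) auto
    finally show ?thesis .
  qed
  have "(\<Sum>t = 1..T. \<Sum>k = 1..t - 1. \<rho> ^ (t - 1 - k) * a k)
      = (\<Sum>t = 1..T. \<Sum>k\<in>{k. k \<in> {1..T} \<and> k < t}. \<rho> ^ (t - 1 - k) * a k)"
    by (intro sum.cong) auto
  also have "\<dots> = (\<Sum>k = 1..T. \<Sum>t\<in>{t. t \<in> {1..T} \<and> k < t}. \<rho> ^ (t - 1 - k) * a k)"
    by (rule sum.swap_restrict) auto
  also have "\<dots> = (\<Sum>k = 1..T. a k * (\<Sum>t\<in>{k<..T}. \<rho> ^ (t - 1 - k)))"
    by (intro sum.cong) (auto simp: sum_distrib_left mult.commute intro!: sum.cong)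
  also have "\<dots> \<le> (\<Sum>k = 1..T. a k * (1 / (1 - \<rho>)))"
    by (intro sum_mono mult_left_mono tail a_nonneg)
  finally show ?thesis
    by (simp add: sum_divide_distrib)
qed

lemma eISS_sum_norm_le:
  assumes iss: "eISS f0 \<beta> \<gamma> \<rho>" and init: "xs 1 = 0"
  shows "(\<Sum>t = 1..T. norm (xs t)) \<le> \<gamma> / (1 - \<rho>) * (\<Sum>k = 1..T. norm (xs (Suc k) - f0 (xs k)))"
proof -
  define v where "v k = xs (Suc k) - f0 (xs k)" for k
  have \<gamma>: "0 \<le> \<gamma>" and \<rho>: "0 \<le> \<rho>" "\<rho> < 1"
    using iss by (auto simp: eISS_def)
  have "norm (xs t) \<le> \<gamma> * (\<Sum>k = 1..t - 1. \<rho> ^ (t - 1 - k) * norm (v k))" if "t \<ge> 1" for t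
  proof -
    have "\<forall>k\<ge>1. xs (Suc k) = f0 (xs k) + v k"
      by (simp add: v_def)
    with iss that have "norm (xs t) \<le> \<beta> * \<rho> ^ (t - 1) * norm (xs 1) + \<gamma> * (\<Sum>k = 1..t - 1. \<rho> ^ (t - 1 - k) * norm (v k))"
      unfolding eISS_def by blast
    then show ?thesis
      using init by simp
  qed
  then have "(\<Sum>t = 1..T. norm (xs t)) \<le> \<gamma> * (\<Sum>t = 1..T. \<Sum>k = 1..t - 1. \<rho> ^ (t - 1 - k) * norm (v k))"
    by (auto simp: sum_distrib_left intro!: sum_mono)
  also have "\<dots> \<le> \<gamma> * ((\<Sum>k = 1..T. norm (v k)) / (1 - \<rho>))"
    using \<gamma> \<rho> by (intro mult_left_mono sum_geometric_convolution_le) auto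
  finally show ?thesis
    by (simp add: v_def)
qed

lemma sum_le_card_mult_sqrt:
  fixes a :: "'a \<Rightarrow> real" and Q :: real
  assumes "(\<Sum>z\<in>S. (a z)\<^sup>2) \<le> card S * Q"
  shows "(\<Sum>z\<in>S. a z) \<le> card S * sqrt Q"
proof (cases "card S = 0")
  case False
  have "(\<Sum>z\<in>S. a z)\<^sup>2 \<le> (\<Sum>z\<in>S. (a z)\<^sup>2) * card S"
    by (rule sum_squared_le_sum_of_squares)
  also have "\<dots> \<le> (card S)\<^sup>2 * Q"
    using mult_right_mono[OF assms, of "card S"] by (simp add: power2_eq_square mult_ac)
  finally have "(\<Sum>z\<in>S. a z) \<le> sqrt ((card S)\<^sup>2 * Q)"
    by (rule real_le_rsqrt)
  then show ?thesis
    by (simp add: real_sqrt_mult)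
qed (auto simp: card_eq_0_iff)

lemma omac_residual_sq_le:
  fixes x w x' :: "real^'n" and Bx :: "real^'m^'n" and u :: "real^'m"
    and F :: "'z \<Rightarrow> real^'h \<Rightarrow> real^'n" and \<phi> :: "real^'n \<Rightarrow> real^'p \<Rightarrow> 'z"
  assumes rank: "rank Bx = CARD('n)"
    and dyn: "x' = f0 x + Bx *v u - F (\<phi> x \<Theta>) c + w"
    and ctrl: "u = pinv Bx *v F (\<phi> x \<Theta>hat) chat"
    and obs: "y = f0 x + Bx *v u - x'"
    and convex: "convex_on UNIV (omac_loss F \<phi> x y)"
    and diff: "omac_loss F \<phi> x y differentiable (at (\<Theta>hat, chat))"
  defines "D \<equiv> frechet_derivative (omac_loss F \<phi> x y) (at (\<Theta>hat, chat))"
  shows "(norm (x' - f0 x))\<^sup>2 \<le> (norm w)\<^sup>2 + (D (\<Theta>hat, 0) - D (\<Theta>, 0)) + (D (0, chat) - D (0, c))"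
proof -
  have Bu: "Bx *v u = F (\<phi> x \<Theta>hat) chat"
    using ctrl matrix_mul_pinv_full_row_rank[OF rank] by (simp add: matrix_vector_mul_assoc)
  have estimate: "F (\<phi> x \<Theta>hat) chat - y = x' - f0 x"
    using obs Bu by (simp add: algebra_simps)
  have truth: "F (\<phi> x \<Theta>) c - y = w"
    using obs dyn by (simp add: algebra_simps)
  have "(omac_loss F \<phi> x y has_derivative D) (at (\<Theta>hat, chat))"
    unfolding D_def using diff by (rule frechet_derivative_works[THEN iffD1])
  then show ?thesis
    using convex_on_prod_above_tangent[OF convex, of D \<Theta>hat chat \<Theta> c] estimate truth
    by (simp add: omac_loss_def)
qed

lemma ACE_le_root_mean_square_residual:
  fixes x :: "nat \<Rightarrow> nat \<Rightarrow> real^'n"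
  assumes NT: "N \<ge> 1" "T \<ge> 1"
    and iss: "eISS f0 \<beta> \<gamma> \<rho>" and init: "\<And>i. i \<in> {1..N} \<Longrightarrow> x i 1 = 0"
    and mean_square: "(\<Sum>i = 1..N. \<Sum>t = 1..T. (norm (x i (Suc t) - f0 (x i t)))\<^sup>2) \<le> real T * real N * Q"
  shows "ACE N T x \<le> \<gamma> / (1 - \<rho>) * sqrt Q"
proof -
  define v where "v i t = x i (Suc t) - f0 (x i t)" for i t
  have "(\<Sum>(i, t)\<in>{1..N} \<times> {1..T}. (norm (v i t))\<^sup>2) \<le> card ({1..N} \<times> {1..T}) * Q"
    using mean_square by (simp add: v_def sum.cartesian_product mult_ac)
  then have "(\<Sum>(i, t)\<in>{1..N} \<times> {1..T}. norm (v i t)) \<le> card ({1..N} \<times> {1..T}) * sqrt Q"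
    by (intro sum_le_card_mult_sqrt) (simp only: case_prod_unfold)
  then have v_sum: "(\<Sum>i = 1..N. \<Sum>t = 1..T. norm (v i t)) \<le> real N * real T * sqrt Q"
    by (simp add: sum.cartesian_product)
  have "(\<Sum>t = 1..T. norm (x i t)) \<le> \<gamma> / (1 - \<rho>) * (\<Sum>t = 1..T. norm (v i t))" if "i \<in> {1..N}" for i
    unfolding v_def using iss init[OF that] by (rule eISS_sum_norm_le)
  then have x_sum: "(\<Sum>i = 1..N. \<Sum>t = 1..T. norm (x i t)) \<le> \<gamma> / (1 - \<rho>) * (\<Sum>i = 1..N. \<Sum>t = 1..T. norm (v i t))"
    by (auto simp: sum_distrib_left intro: sum_mono)
  have "0 \<le> \<gamma> / (1 - \<rho>)"
    using iss by (simp add: eISS_def)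
  then have "(\<Sum>i = 1..N. \<Sum>t = 1..T. norm (x i t)) \<le> \<gamma> / (1 - \<rho>) * (real N * real T * sqrt Q)"
    using x_sum v_sum by (meson mult_left_mono order_trans)
  then show ?thesis
    using NT by (simp add: ACE_def pos_divide_le_eq mult_ac)
qed

theorem theorem3:
  fixes f0 :: "real^'n \<Rightarrow> real^'n"
    and B :: "real^'n \<Rightarrow> real^'m^'n"
    and F :: "'z \<Rightarrow> real^'h \<Rightarrow> real^'n"
    and \<phi> :: "real^'n \<Rightarrow> real^'p \<Rightarrow> 'z"
    and f :: "real^'n \<Rightarrow> real^'h \<Rightarrow> real^'n"
    and \<Theta> :: "real^'p"
    and K1 :: "(real^'p) set" and K2 :: "(real^'h) set"
    and c :: "nat \<Rightarrow> real^'h"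
    and x w y :: "nat \<Rightarrow> nat \<Rightarrow> real^'n"
    and u :: "nat \<Rightarrow> nat \<Rightarrow> real^'m"
    and \<Theta>hat :: "nat \<Rightarrow> real^'p"
    and chat :: "nat \<Rightarrow> nat \<Rightarrow> real^'h"
    and \<epsilon>1 \<epsilon>2 :: "nat \<Rightarrow> real"
    and N T :: nat and W \<beta> \<gamma> \<rho> :: real
  assumes NT: "N \<ge> 1" "T \<ge> 1"
    and rankB: "\<And>z. rank (B z) = CARD('n)"
    and iss: "eISS f0 \<beta> \<gamma> \<rho>"
    and cvx: "convex K1" "convex K2"
    and model: "\<And>z cc. f z cc = F (\<phi> z \<Theta>) cc"
    and Theta_in: "\<Theta> \<in> K1"
    and c_in: "\<And>i. i \<in> {1..N} \<Longrightarrow> c i \<in> K2"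
    and w_bd: "\<And>i t. i \<in> {1..N} \<Longrightarrow> t \<in> {1..T} \<Longrightarrow> norm (w i t) \<le> W"
    and x_init: "\<And>i. i \<in> {1..N} \<Longrightarrow> x i 1 = 0"
    and dyn: "\<And>i t. i \<in> {1..N} \<Longrightarrow> t \<in> {1..T} \<Longrightarrow>
               x i (Suc t) = f0 (x i t) + B (x i t) *v u i t - f (x i t) (c i) + w i t"
    and ctrl: "\<And>i t. i \<in> {1..N} \<Longrightarrow> t \<in> {1..T} \<Longrightarrow>
               u i t = pinv (B (x i t)) *v F (\<phi> (x i t) (\<Theta>hat i)) (chat i t)"
    and obs: "\<And>i t. i \<in> {1..N} \<Longrightarrow> t \<in> {1..T} \<Longrightarrow>
               y i t = f0 (x i t) + B (x i t) *v u i t - x i (Suc t)"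
    and Thetahat_in: "\<And>i. i \<in> {1..N} \<Longrightarrow> \<Theta>hat i \<in> K1"
    and chat_in: "\<And>i t. i \<in> {1..N} \<Longrightarrow> t \<in> {1..T} \<Longrightarrow> chat i t \<in> K2"
    and loss_diff: "\<And>i t z. i \<in> {1..N} \<Longrightarrow> t \<in> {1..T} \<Longrightarrow>
               omac_loss F \<phi> (x i t) (y i t) differentiable (at z)"
    and loss_convex: "\<And>i t. i \<in> {1..N} \<Longrightarrow> t \<in> {1..T} \<Longrightarrow>
               convex_on UNIV (omac_loss F \<phi> (x i t) (y i t))"
    and regret1: "\<forall>\<Theta>'\<in>K1.
         (\<Sum>i = 1..N. \<Sum>t = 1..T.
            frechet_derivative (omac_loss F \<phi> (x i t) (y i t)) (at (\<Theta>hat i, chat i t)) (\<Theta>hat i, 0))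
       - (\<Sum>i = 1..N. \<Sum>t = 1..T.
            frechet_derivative (omac_loss F \<phi> (x i t) (y i t)) (at (\<Theta>hat i, chat i t)) (\<Theta>', 0))
       \<le> real T * \<epsilon>1 N"
    and regret2: "\<forall>c' :: nat \<Rightarrow> real^'h. (\<forall>i\<in>{1..N}. c' i \<in> K2) \<longrightarrow>
         (\<Sum>i = 1..N. (\<Sum>t = 1..T.
            frechet_derivative (omac_loss F \<phi> (x i t) (y i t)) (at (\<Theta>hat i, chat i t)) (0, chat i t))
          - (\<Sum>t = 1..T.
            frechet_derivative (omac_loss F \<phi> (x i t) (y i t)) (at (\<Theta>hat i, chat i t)) (0, c' i)))
       \<le> real N * \<epsilon>2 T"
    and eps1_o: "\<epsilon>1 \<in> o(\<lambda>n. real n)"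
    and eps2_o: "\<epsilon>2 \<in> o(\<lambda>n. real n)"
  shows "ACE N T x \<le> \<gamma> / (1 - \<rho>) * sqrt (W\<^sup>2 + \<epsilon>2 T / real T + \<epsilon>1 N / real N)"
proof -
  define D where "D i t = frechet_derivative (omac_loss F \<phi> (x i t) (y i t)) (at (\<Theta>hat i, chat i t))" for i t
  have step: "(norm (x i (Suc t) - f0 (x i t)))\<^sup>2
      \<le> W\<^sup>2 + (D i t (\<Theta>hat i, 0) - D i t (\<Theta>, 0)) + (D i t (0, chat i t) - D i t (0, c i))"
    if "i \<in> {1..N}" "t \<in> {1..T}" for i t
  proof -
    have "(norm (w i t))\<^sup>2 \<le> W\<^sup>2"
      using w_bd[OF that] by (simp add: power_mono)
    then show ?thesis
      using omac_residual_sq_le[where ?f0.0 = f0 and F = F and \<phi> = \<phi> and x = "x i t",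
          OF rankB dyn[OF that, unfolded model] ctrl[OF that] obs[OF that] loss_convex[OF that] loss_diff[OF that]]
      unfolding D_def by linarith
  qed
  have "(\<Sum>i = 1..N. \<Sum>t = 1..T. (norm (x i (Suc t) - f0 (x i t)))\<^sup>2)
      \<le> (\<Sum>i = 1..N. \<Sum>t = 1..T. W\<^sup>2 + (D i t (\<Theta>hat i, 0) - D i t (\<Theta>, 0)) + (D i t (0, chat i t) - D i t (0, c i)))"
    using step by (intro sum_mono) auto
  also have "\<dots> = real N * real T * W\<^sup>2
      + ((\<Sum>i = 1..N. \<Sum>t = 1..T. D i t (\<Theta>hat i, 0)) - (\<Sum>i = 1..N. \<Sum>t = 1..T. D i t (\<Theta>, 0)))
      + (\<Sum>i = 1..N. (\<Sum>t = 1..T. D i t (0, chat i t)) - (\<Sum>t = 1..T. D i t (0, c i)))"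
    by (simp add: sum.distrib sum_subtractf)
  also have "\<dots> \<le> real N * real T * W\<^sup>2 + real T * \<epsilon>1 N + real N * \<epsilon>2 T"
    using regret1 Theta_in regret2 c_in unfolding D_def by (intro add_mono) auto
  also have "\<dots> = real T * real N * (W\<^sup>2 + \<epsilon>2 T / real T + \<epsilon>1 N / real N)"
    using NT by (simp add: field_simps)
  finally have "(\<Sum>i = 1..N. \<Sum>t = 1..T. (norm (x i (Suc t) - f0 (x i t)))\<^sup>2)
      \<le> real T * real N * (W\<^sup>2 + \<epsilon>2 T / real T + \<epsilon>1 N / real N)" .
  with NT iss x_init show ?thesis
    by (rule ACE_le_root_mean_square_residual)
qed

end
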